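(* Let $G$ be a compact Hausdorff group and suppose an element $g\in G$ has a countable Engel sink $\{s_1,s_2,\dots\}$. Then there are positive integers $i,j$ and a nonempty open set $U\subseteq G$ such that $[u,{}_i g]=s_j$ for all $u\in U$. If in addition $G$ is profinite, then there are positive integers $i,j$ and a coset $Nb$ of an open normal subgroup $N$ of $G$ such that $[nb,{}_i g]=s_j$ for all $n\in N$.
   Context: Commutators are left-normed, $[a,b]=a^{-1}b^{-1}ab$, and $[x,{}_n g]=[x,g,\dots,g]$ with $g$ repeated $n$ times. An Engel sink of an element $g$ of a group $G$ is a set $\mathscr E(g)\subseteq G$ such that for every $x\in G$ there is a positive integer $n(x,g)$ with $[x,{}_n g]\in\mathscr E(g)$ for all $n\ge n(x,g)$. "Countable" means finite or denumerable. *)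

theory Defs
  imports "HOL-Analysis.Analysis" "HOL-Algebra.Coset"
begin

definition comm :: "('a, 'b) monoid_scheme \<Rightarrow> 'a \<Rightarrow> 'a \<Rightarrow> 'a" where
  "comm G a b = inv\<^bsub>G\<^esub> a \<otimes>\<^bsub>G\<^esub> inv\<^bsub>G\<^esub> b \<otimes>\<^bsub>G\<^esub> a \<otimes>\<^bsub>G\<^esub> b"

primrec engel_comm :: "('a, 'b) monoid_scheme \<Rightarrow> 'a \<Rightarrow> nat \<Rightarrow> 'a \<Rightarrow> 'a" where
  "engel_comm G x 0 g = x"
| "engel_comm G x (Suc n) g = comm G (engel_comm G x n g) g"

definition engel_sink :: "('a, 'b) monoid_scheme \<Rightarrow> 'a \<Rightarrow> 'a set \<Rightarrow> bool" where
  "engel_sink G g E \<longleftrightarrow> E \<subseteq> carrier G \<and>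
     (\<forall>x\<in>carrier G. \<exists>n>0. \<forall>m\<ge>n. engel_comm G x m g \<in> E)"

definition topological_group :: "('a, 'b) monoid_scheme \<Rightarrow> 'a topology \<Rightarrow> bool" where
  "topological_group G T \<longleftrightarrow> group G \<and> topspace T = carrier G \<and>
     continuous_map (prod_topology T T) T (\<lambda>(x, y). x \<otimes>\<^bsub>G\<^esub> y) \<and>
     continuous_map T T (\<lambda>x. inv\<^bsub>G\<^esub> x)"

definition totally_disconnected_space :: "'a topology \<Rightarrow> bool" where
  "totally_disconnected_space T \<longleftrightarrow>
     (\<forall>S. connectedin T S \<longrightarrow> (\<forall>x\<in>S. \<forall>y\<in>S. x = y))"

definition profinite_group :: "('a, 'b) monoid_scheme \<Rightarrow> 'a topology \<Rightarrow> bool" where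
  "profinite_group G T \<longleftrightarrow> topological_group G T \<and> compact_space T \<and>
     Hausdorff_space T \<and> totally_disconnected_space T"

end

theory Submission
  imports Defs
begin

text \<open>The fibres \<open>{x. [x,\<^sub>i g] = s\<^sub>j}\<close> are closed, being preimages of points under
  continuous maps, and by the Engel sink property countably many of them cover \<open>G\<close>; by Baire's
  theorem one of them has nonempty interior \<open>U\<close>. If \<open>G\<close> is profinite and \<open>b \<in> U\<close>, the
  neighbourhood \<open>U b\<^sup>-\<^sup>1\<close> of \<open>1\<close> contains a clopen set \<open>C\<close>. The normal core \<open>N\<close> of the
  right stabiliser \<open>{y. C y = C}\<close> lies in \<open>C\<close>, and it is open: by compactness of \<open>G \<times> G\<close> and
  the tube lemma, some neighbourhood of \<open>1\<close> lies in every conjugate of the stabiliser.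
  Hence \<open>N b \<subseteq> U\<close>.\<close>

lemma topological_group_continuous_map_mult:
  assumes "topological_group G T" "continuous_map X T f" "continuous_map X T h"
  shows "continuous_map X T (\<lambda>x. f x \<otimes>\<^bsub>G\<^esub> h x)"
proof -
  have "continuous_map (prod_topology T T) T (\<lambda>(x, y). x \<otimes>\<^bsub>G\<^esub> y)"
    using assms(1) unfolding topological_group_def by blast
  from continuous_map_compose[OF continuous_map_pairedI[OF assms(2,3)] this]
  show ?thesis by (simp add: o_def)
qed

lemma topological_group_continuous_map_inv:
  assumes "topological_group G T" "continuous_map X T f"
  shows "continuous_map X T (\<lambda>x. inv\<^bsub>G\<^esub> f x)"
proof -
  have "continuous_map T T (\<lambda>x. inv\<^bsub>G\<^esub> x)"
    using assms(1) unfolding topological_group_def by blast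
  from continuous_map_compose[OF assms(2) this] show ?thesis by (simp add: o_def)
qed

lemma topological_group_continuous_map_const:
  assumes "topological_group G T" "c \<in> carrier G"
  shows "continuous_map X T (\<lambda>x. c)"
  using assms unfolding topological_group_def by simp

lemma continuous_map_engel_comm:
  assumes "topological_group G T" "g \<in> carrier G"
  shows "continuous_map T T (\<lambda>x. engel_comm G x n g)"
proof (induction n)
  case 0
  show ?case by (simp add: continuous_map_id[unfolded id_def])
next
  case (Suc n)
  then show ?case
    unfolding engel_comm.simps comm_def
    by (intro topological_group_continuous_map_mult[OF assms(1)]
        topological_group_continuous_map_inv[OF assms(1)]
        topological_group_continuous_map_const[OF assms])
qed

lemma Baire_closed_cover_interior:
  assumes "locally_compact_space X" "regular_space X" "topspace X \<noteq> {}"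
    and "countable \<C>" "\<And>C. C \<in> \<C> \<Longrightarrow> closedin X C" "\<Union>\<C> = topspace X"
  shows "\<exists>C\<in>\<C>. X interior_of C \<noteq> {}"
proof (rule ccontr)
  assume "\<not> ?thesis"
  then have "X interior_of \<Union>\<C> = {}"
    using assms by (intro Baire_category_aux) auto
  with assms(3,6) show False by simp
qed

lemma engel_sink_countable_imp_open_fibre:
  assumes "topological_group G T" "locally_compact_space T" "Hausdorff_space T"
    and "g \<in> carrier G" "engel_sink G g E" "countable E"
  shows "\<exists>i>0. \<exists>e\<in>E. \<exists>U. openin T U \<and> U \<noteq> {} \<and> (\<forall>u\<in>U. engel_comm G u i g = e)"
proof -
  interpret group G
    using assms(1) unfolding topological_group_def by blast
  have top: "topspace T = carrier G"
    using assms(1) unfolding topological_group_def by blast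
  define fibre where "fibre i e = {x \<in> topspace T. engel_comm G x i g = e}" for i e
  let ?\<C> = "(\<lambda>(i, e). fibre i e) ` ({0<..} \<times> E)"
  have "\<exists>C\<in>?\<C>. T interior_of C \<noteq> {}"
  proof (rule Baire_closed_cover_interior)
    show "regular_space T"
      using assms(2,3) by (rule locally_compact_Hausdorff_imp_regular_space)
    show "topspace T \<noteq> {}"
      using top one_closed by blast
    show "countable ?\<C>"
      using assms(6) by auto
    show "closedin T C" if C: "C \<in> ?\<C>" for C
    proof -
      obtain i e where "C = fibre i e" "e \<in> E"
        using C by auto
      have "closedin T {e}"
        using \<open>e \<in> E\<close> assms(3,5) top by (intro closedin_Hausdorff_singleton) (auto simp: engel_sink_def)
      then have "closedin T {x \<in> topspace T. engel_comm G x i g \<in> {e}}"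
        by (rule closedin_continuous_map_preimage[OF continuous_map_engel_comm[OF assms(1,4)]])
      then show ?thesis
        unfolding \<open>C = fibre i e\<close> fibre_def by simp
    qed
    show "\<Union>?\<C> = topspace T"
    proof (intro equalityI subsetI)
      fix x assume "x \<in> topspace T"
      then obtain n where "n > 0" "engel_comm G x n g \<in> E"
        using assms(5) top unfolding engel_sink_def by blast
      with \<open>x \<in> topspace T\<close> show "x \<in> \<Union>?\<C>"
        unfolding fibre_def by blast
    qed (auto simp: fibre_def)
  qed (fact assms(2))
  then obtain i e where "i > 0" "e \<in> E" "T interior_of fibre i e \<noteq> {}"
    by auto
  moreover have "\<forall>u \<in> T interior_of fibre i e. engel_comm G u i g = e"
    using interior_of_subset[of T "fibre i e"] unfolding fibre_def by blast
  ultimately show ?thesis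
    using openin_interior_of[of T "fibre i e"] by blast
qed

definition right_stabilizer :: "('a, 'b) monoid_scheme \<Rightarrow> 'a set \<Rightarrow> 'a set" where
  "right_stabilizer G C = {y \<in> carrier G. \<forall>c\<in>carrier G. c \<otimes>\<^bsub>G\<^esub> y \<in> C \<longleftrightarrow> c \<in> C}"

definition normal_core :: "('a, 'b) monoid_scheme \<Rightarrow> 'a set \<Rightarrow> 'a set" where
  "normal_core G H = {x \<in> carrier G. \<forall>h\<in>carrier G. h \<otimes>\<^bsub>G\<^esub> x \<otimes>\<^bsub>G\<^esub> inv\<^bsub>G\<^esub> h \<in> H}"

lemma (in group) subgroup_right_stabilizer: "subgroup (right_stabilizer G C) G"
proof (rule subgroupI)
  show "right_stabilizer G C \<subseteq> carrier G"
    by (auto simp: right_stabilizer_def)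
  have "\<one> \<in> right_stabilizer G C"
    by (simp add: right_stabilizer_def)
  then show "right_stabilizer G C \<noteq> {}"
    by blast
next
  fix y assume "y \<in> right_stabilizer G C"
  then have y: "y \<in> carrier G" and stab: "\<And>c. c \<in> carrier G \<Longrightarrow> c \<otimes> y \<in> C \<longleftrightarrow> c \<in> C"
    by (auto simp: right_stabilizer_def)
  have "c \<otimes> inv y \<in> C \<longleftrightarrow> c \<in> C" if "c \<in> carrier G" for c
    using stab[of "c \<otimes> inv y"] that y by (simp add: m_assoc)
  with y show "inv y \<in> right_stabilizer G C"
    by (simp add: right_stabilizer_def)
next
  fix y z assume "y \<in> right_stabilizer G C" "z \<in> right_stabilizer G C"
  then show "y \<otimes> z \<in> right_stabilizer G C"
    by (simp add: right_stabilizer_def m_assoc [symmetric])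
qed

lemma (in group) right_stabilizer_subset:
  assumes "\<one> \<in> C"
  shows "right_stabilizer G C \<subseteq> C"
proof
  fix y assume "y \<in> right_stabilizer G C"
  then have "y \<in> carrier G" "\<one> \<otimes> y \<in> C \<longleftrightarrow> \<one> \<in> C"
    unfolding right_stabilizer_def by blast+
  with assms show "y \<in> C"
    by simp
qed

lemma (in group) normal_normal_core:
  assumes "subgroup H G"
  shows "normal_core G H \<lhd> G"
proof -
  interpret H: subgroup H G by (fact assms)
  have conj_mult: "h \<otimes> (x \<otimes> y) \<otimes> inv h = (h \<otimes> x \<otimes> inv h) \<otimes> (h \<otimes> y \<otimes> inv h)"
    and conj_inv: "h \<otimes> inv x \<otimes> inv h = inv (h \<otimes> x \<otimes> inv h)"
    and conj_conj: "h \<otimes> (y \<otimes> x \<otimes> inv y) \<otimes> inv h = (h \<otimes> y) \<otimes> x \<otimes> inv (h \<otimes> y)"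
    if "h \<in> carrier G" "x \<in> carrier G" "y \<in> carrier G" for h x y
    using that by (simp_all add: m_assoc inv_solve_left inv_mult_group)
  have "subgroup (normal_core G H) G"
  proof (rule subgroupI)
    show "normal_core G H \<subseteq> carrier G" "normal_core G H \<noteq> {}"
      by (auto simp: normal_core_def intro!: exI[of _ \<one>])
  next
    fix x assume "x \<in> normal_core G H"
    then show "inv x \<in> normal_core G H"
      by (simp add: normal_core_def conj_inv)
  next
    fix x y assume "x \<in> normal_core G H" "y \<in> normal_core G H"
    then show "x \<otimes> y \<in> normal_core G H"
      by (simp add: normal_core_def conj_mult)
  qed
  moreover have "y \<otimes> x \<otimes> inv y \<in> normal_core G H"
    if y: "y \<in> carrier G" and x: "x \<in> normal_core G H" for x y
    unfolding normal_core_def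
  proof (intro CollectI conjI ballI)
    have "x \<in> carrier G"
      using x by (simp add: normal_core_def)
    then show "y \<otimes> x \<otimes> inv y \<in> carrier G"
      using y by simp
    fix h assume h: "h \<in> carrier G"
    then have "(h \<otimes> y) \<otimes> x \<otimes> inv (h \<otimes> y) \<in> H"
      using x y unfolding normal_core_def by blast
    with h y \<open>x \<in> carrier G\<close> show "h \<otimes> (y \<otimes> x \<otimes> inv y) \<otimes> inv h \<in> H"
      by (simp only: conj_conj)
  qed
  ultimately show ?thesis
    by (simp add: normal_inv_iff)
qed

lemma (in group) normal_core_subset: "normal_core G H \<subseteq> H"
proof
  fix x assume x: "x \<in> normal_core G H"
  then have "\<one> \<otimes> x \<otimes> inv \<one> \<in> H"
    unfolding normal_core_def by blast
  with x show "x \<in> H"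
    by (simp add: normal_core_def)
qed

lemma (in group) topological_group_openin_subgroup:
  assumes "topological_group G T" "subgroup H G" "openin T V" "\<one> \<in> V" "V \<subseteq> H"
  shows "openin T H"
  unfolding openin_subopen[of T H]
proof
  interpret H: subgroup H G by (fact assms(2))
  fix x assume "x \<in> H"
  define B where "B = {y \<in> topspace T. inv x \<otimes> y \<in> V}"
  have "continuous_map T T (\<lambda>y. inv x \<otimes> y)"
    using \<open>x \<in> H\<close> by (intro topological_group_continuous_map_mult[OF assms(1)]
        topological_group_continuous_map_const[OF assms(1)] continuous_map_id[unfolded id_def]) auto
  then have "openin T B"
    unfolding B_def using assms(3) by (rule openin_continuous_map_preimage)
  moreover have "x \<in> B"
    using \<open>x \<in> H\<close> assms(1,4) by (auto simp: B_def topological_group_def)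
  moreover have "B \<subseteq> H"
  proof
    fix y assume "y \<in> B"
    then have "y \<in> carrier G" "inv x \<otimes> y \<in> H"
      using assms(1,5) by (auto simp: B_def topological_group_def)
    then have "x \<otimes> (inv x \<otimes> y) \<in> H"
      using \<open>x \<in> H\<close> by blast
    with \<open>y \<in> carrier G\<close> \<open>x \<in> H\<close> show "y \<in> H"
      by (simp add: m_assoc [symmetric])
  qed
  ultimately show "\<exists>B. openin T B \<and> x \<in> B \<and> B \<subseteq> H"
    by blast
qed

lemma openin_clopen_preimage_iff:
  assumes "continuous_map X Y f" "continuous_map X Y h" "openin Y C" "closedin Y C"
  shows "openin X {p \<in> topspace X. f p \<in> C \<longleftrightarrow> h p \<in> C}"
proof -
  have "openin Y (topspace Y - C)"
    using assms(4) by blast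
  then have "openin X (({p \<in> topspace X. f p \<in> C} \<inter> {p \<in> topspace X. h p \<in> C}) \<union>
      ({p \<in> topspace X. f p \<in> topspace Y - C} \<inter> {p \<in> topspace X. h p \<in> topspace Y - C}))"
    using assms by (intro openin_Un openin_Int openin_continuous_map_preimage)
  moreover have "f p \<in> topspace Y" "h p \<in> topspace Y" if "p \<in> topspace X" for p
    using assms(1,2) that by (auto dest: continuous_map_image_subset_topspace)
  then have "{p \<in> topspace X. f p \<in> C \<longleftrightarrow> h p \<in> C} =
      ({p \<in> topspace X. f p \<in> C} \<inter> {p \<in> topspace X. h p \<in> C}) \<union>
      ({p \<in> topspace X. f p \<in> topspace Y - C} \<inter> {p \<in> topspace X. h p \<in> topspace Y - C})"
    by blast
  ultimately show ?thesis
    by simp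
qed

lemma (in group) compact_group_conjugation_nbhd:
  assumes "topological_group G T" "compact_space T" "openin T C" "closedin T C"
  obtains V where "openin T V" "\<one> \<in> V"
    "\<And>c h v. \<lbrakk>c \<in> carrier G; h \<in> carrier G; v \<in> V\<rbrakk> \<Longrightarrow> c \<otimes> (h \<otimes> v \<otimes> inv h) \<in> C \<longleftrightarrow> c \<in> C"
proof -
  have top: "topspace T = carrier G"
    using assms(1) unfolding topological_group_def by blast
  let ?P = "prod_topology (prod_topology T T) T"
  let ?E = "{p \<in> topspace ?P. fst (fst p) \<otimes> (snd (fst p) \<otimes> snd p \<otimes> inv snd (fst p)) \<in> C \<longleftrightarrow> fst (fst p) \<in> C}"
  have projections: "continuous_map ?P T (\<lambda>p. fst (fst p))" "continuous_map ?P T (\<lambda>p. snd (fst p))"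
      "continuous_map ?P T snd"
    using continuous_map_compose[OF continuous_map_fst continuous_map_fst]
      continuous_map_compose[OF continuous_map_fst continuous_map_snd] continuous_map_snd
    by (simp_all add: o_def)
  have "openin ?P ?E"
    by (intro openin_clopen_preimage_iff[where Y = T] assms(3,4) topological_group_continuous_map_mult[OF assms(1)]
        topological_group_continuous_map_inv[OF assms(1)] projections)
  moreover have "compactin (prod_topology T T) (topspace (prod_topology T T))"
    using assms(2) compact_space_def compact_space_prod_topology by blast
  moreover have "\<one> \<in> topspace T"
    by (simp add: top)
  moreover have "topspace (prod_topology T T) \<times> {\<one>} \<subseteq> ?E"
  proof
    fix p assume "p \<in> topspace (prod_topology T T) \<times> {\<one>}"
    then obtain c h where "p = ((c, h), \<one>)" "c \<in> carrier G" "h \<in> carrier G"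
      by (auto simp: top)
    then show "p \<in> ?E"
      by (simp add: top)
  qed
  ultimately have "\<exists>U V. openin (prod_topology T T) U \<and> openin T V \<and>
      topspace (prod_topology T T) \<subseteq> U \<and> \<one> \<in> V \<and> U \<times> V \<subseteq> ?E"
    by (rule tube_lemma_left)
  then obtain U V where V: "openin T V" "\<one> \<in> V"
    and UV: "topspace (prod_topology T T) \<subseteq> U" "U \<times> V \<subseteq> ?E"
    by blast
  moreover have "c \<otimes> (h \<otimes> v \<otimes> inv h) \<in> C \<longleftrightarrow> c \<in> C"
    if "c \<in> carrier G" "h \<in> carrier G" "v \<in> V" for c h v
  proof -
    have "((c, h), v) \<in> U \<times> V"
      using UV(1) that top by auto
    with UV(2) have "((c, h), v) \<in> ?E"
      by blast
    then show ?thesis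
      by simp
  qed
  ultimately show ?thesis
    using that by blast
qed

lemma (in group) openin_normal_core_right_stabilizer:
  assumes "topological_group G T" "compact_space T" "openin T C" "closedin T C"
  shows "openin T (normal_core G (right_stabilizer G C))"
proof -
  obtain V where V: "openin T V" "\<one> \<in> V"
    and conj: "\<And>c h v. \<lbrakk>c \<in> carrier G; h \<in> carrier G; v \<in> V\<rbrakk> \<Longrightarrow> c \<otimes> (h \<otimes> v \<otimes> inv h) \<in> C \<longleftrightarrow> c \<in> C"
    using compact_group_conjugation_nbhd[OF assms] by blast
  have "V \<subseteq> carrier G"
    using V(1) openin_subset assms(1) unfolding topological_group_def by blast
  then have "V \<subseteq> normal_core G (right_stabilizer G C)"
    using conj by (auto simp: normal_core_def right_stabilizer_def)
  then show ?thesis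
    using topological_group_openin_subgroup[OF assms(1) _ V]
    by (simp add: normal_imp_subgroup normal_normal_core subgroup_right_stabilizer)
qed

lemma compact_totally_disconnected_clopen_nbhd:
  assumes "compact_space X" "Hausdorff_space X" "totally_disconnected_space X"
    and "openin X W" "x \<in> W"
  obtains C where "closedin X C" "openin X C" "x \<in> C" "C \<subseteq> W"
proof -
  have "x \<in> topspace X"
    using assms(4,5) openin_subset by blast
  define Q where "Q = quasi_component_of_set X x"
  have Q: "Q \<in> quasi_components_of X"
    unfolding Q_def quasi_components_of_def using \<open>x \<in> topspace X\<close> by blast
  have "closedin X Q"
    unfolding Q_def by (rule closedin_quasi_component_of)
  then have "compactin X Q"
    using assms(1) closedin_compact_space by blast
  then have "Q \<in> connected_components_of X"
    using compact_quasi_eq_connected_components_of[OF compact_imp_locally_compact_space[OF assms(1)] assms(2)]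
      Q by blast
  then have "connectedin X Q"
    by (rule connectedin_connected_components_of)
  moreover have "x \<in> Q"
    unfolding Q_def using \<open>x \<in> topspace X\<close> by simp
  ultimately have "Q = {x}"
    using assms(3) unfolding totally_disconnected_space_def by blast
  moreover have "compactin X (topspace X - W)"
    using assms(1,4) closedin_compact_space by blast
  ultimately have "separated_between X Q (topspace X - W)"
    using separated_between_quasi_component_compact[OF Q] assms(5) by (simp add: disjnt_def)
  then obtain U V where U: "openin X U" "Q \<subseteq> U" and V: "openin X V" "topspace X - W \<subseteq> V"
    and UV: "U \<union> V = topspace X" "disjnt U V"
    unfolding separated_between_def by blast
  have "U = topspace X - V"
    using UV unfolding disjnt_def by blast
  then have "closedin X U"
    using V(1) by (simp add: closedin_diff)
  moreover have "U \<subseteq> W"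
    using \<open>U = topspace X - V\<close> V(2) by blast
  ultimately show ?thesis
    using that U \<open>Q = {x}\<close> by blast
qed

lemma (in group) profinite_group_open_normal_coset_subset:
  assumes "profinite_group G T" "openin T U" "b \<in> U"
  shows "\<exists>N. N \<lhd> G \<and> openin T N \<and> N #> b \<subseteq> U"
proof -
  have G: "topological_group G T" "compact_space T" "Hausdorff_space T" "totally_disconnected_space T"
    using assms(1) unfolding profinite_group_def by blast+
  have top: "topspace T = carrier G"
    using G(1) unfolding topological_group_def by blast
  have b: "b \<in> carrier G"
    using assms(2,3) openin_subset top by blast
  define W where "W = {y \<in> topspace T. y \<otimes> b \<in> U}"
  have "continuous_map T T (\<lambda>y. y \<otimes> b)"
    using continuous_map_id[of T, unfolded id_def] topological_group_continuous_map_const[OF G(1) b]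
    by (rule topological_group_continuous_map_mult[OF G(1)])
  then have "openin T W"
    unfolding W_def using assms(2) by (rule openin_continuous_map_preimage)
  moreover have "\<one> \<in> W"
    using assms(3) b top by (simp add: W_def)
  ultimately obtain C where C: "closedin T C" "openin T C" "\<one> \<in> C" "C \<subseteq> W"
    using compact_totally_disconnected_clopen_nbhd[OF G(2-4)] by metis
  define N where "N = normal_core G (right_stabilizer G C)"
  have "N \<lhd> G"
    unfolding N_def by (simp add: normal_normal_core subgroup_right_stabilizer)
  moreover have "openin T N"
    unfolding N_def using G(1,2) C(2,1) by (rule openin_normal_core_right_stabilizer)
  moreover have "N \<subseteq> C"
    unfolding N_def using normal_core_subset right_stabilizer_subset[OF C(3)] by blast
  then have "N #> b \<subseteq> U"
    using C(4) unfolding W_def r_coset_def by blast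
  ultimately show ?thesis
    by blast
qed

theorem lemma2p6:
  fixes G :: "('a, 'b) monoid_scheme" and T :: "'a topology"
    and g :: 'a and s :: "nat \<Rightarrow> 'a"
  assumes "topological_group G T" and "compact_space T" and "Hausdorff_space T"
    and "g \<in> carrier G"
    and "engel_sink G g (s ` {1..})"
  shows "(\<exists>i j U. i > 0 \<and> j > 0 \<and> openin T U \<and> U \<noteq> {} \<and>
            (\<forall>u\<in>U. engel_comm G u i g = s j))
       \<and> (profinite_group G T \<longrightarrow>
            (\<exists>i j N b. i > 0 \<and> j > 0 \<and> normal N G \<and> openin T N \<and> b \<in> carrier G \<and>
               (\<forall>n\<in>N. engel_comm G (n \<otimes>\<^bsub>G\<^esub> b) i g = s j)))"
proof -
  interpret group G
    using assms(1) unfolding topological_group_def by blast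
  obtain i e U where "i > 0" "e \<in> s ` {1..}" "openin T U" "U \<noteq> {}"
    and fibre: "\<forall>u\<in>U. engel_comm G u i g = e"
    using engel_sink_countable_imp_open_fibre[OF assms(1) compact_imp_locally_compact_space[OF assms(2)]
        assms(3-5)] by blast
  then obtain j where "j \<in> {1..}" "e = s j"
    by blast
  then have "j > 0"
    by simp
  obtain b where "b \<in> U"
    using \<open>U \<noteq> {}\<close> by blast
  then have "b \<in> carrier G"
    using \<open>openin T U\<close> openin_subset assms(1) unfolding topological_group_def by blast
  have "\<exists>N. N \<lhd> G \<and> openin T N \<and> (\<forall>n\<in>N. engel_comm G (n \<otimes>\<^bsub>G\<^esub> b) i g = s j)"
    if "profinite_group G T"
    using profinite_group_open_normal_coset_subset[OF that \<open>openin T U\<close> \<open>b \<in> U\<close>] fibre \<open>e = s j\<close>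
    unfolding r_coset_def by blast
  then show ?thesis
    using \<open>i > 0\<close> \<open>j > 0\<close> \<open>openin T U\<close> \<open>U \<noteq> {}\<close> fibre \<open>e = s j\<close> \<open>b \<in> carrier G\<close> by blast
qed

end
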